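(* Let $r:U\to\mathbb R$ be a $C^4$-smooth plurisubharmonic function on an open neighbourhood $U$ of $0\in\mathbb C^n$ with $r(0)=0$, and suppose that its Taylor expansion at $0$ has the form $$r(z)=\operatorname{Re} z_n+Q_2(z)+Q_3(z)+R_3(z),\qquad R_3(z)=o(\|z\|^3),$$ where for $j=2,3$, $Q_j(z)=\sum_{|\alpha|+|\beta|=j}a^j_{\alpha,\beta}z^\alpha\bar z^\beta$ is a real homogeneous polynomial of degree $j$. Write $H_j(z):=\sum_{|\alpha|=j}a^j_{\alpha,0}z^\alpha$ for $j=2,3$ (so that the sum of the terms of $Q_j$ with $\beta=0$ or $\alpha=0$ equals $2\operatorname{Re}H_j$). Then there exist a neighbourhood $V\subset U$ of $0$ and a constant $C>0$ such that $$r(z)\ge \operatorname{Re} z_n+2\operatorname{Re}\big(H_2(z)+H_3(z)\big)-C\|z\|^4\quad\text{for all } z\in V;$$ in particular $\{z\in V: r(z)<0\}\subset\{z\in V:\operatorname{Re} z_n+2\operatorname{Re}(H_2(z)+H_3(z))-C\|z\|^4<0\}$.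
   Context: Multi-index notation: for $\alpha,\beta\in\mathbb N^n$, $z^\alpha=z_1^{\alpha_1}\cdots z_n^{\alpha_n}$, $|\alpha|=\alpha_1+\dots+\alpha_n$; reality of $Q_j$ means $a^j_{\alpha,\beta}=\overline{a^j_{\beta,\alpha}}$. *)

theory Defs
  imports "HOL-Analysis.Analysis" "HOL-Library.Landau_Symbols"
begin

text \<open>C^k-smoothness of a real-valued function on an open subset of a finite-dimensional
  real normed space (here C^n viewed as R^{2n}): f is C^0 if continuous; f is C^(k+1) if it is
  (Frechet) differentiable at every point of U and every directional derivative
  x |-> Df(x) v is C^k on U.  (In finite dimensions this is the usual notion.)\<close>
fun Ck_on :: "nat \<Rightarrow> 'a::real_normed_vector set \<Rightarrow> ('a \<Rightarrow> real) \<Rightarrow> bool" where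
  "Ck_on 0 U f \<longleftrightarrow> continuous_on U f"
| "Ck_on (Suc k) U f \<longleftrightarrow>
     (\<exists>f'. (\<forall>x\<in>U. (f has_derivative f' x) (at x)) \<and> (\<forall>v. Ck_on k U (\<lambda>x. f' x v)))"

definition usc_on :: "'a::topological_space set \<Rightarrow> ('a \<Rightarrow> real) \<Rightarrow> bool" where
  "usc_on U u \<longleftrightarrow> (\<forall>x\<in>U. \<forall>c. u x < c \<longrightarrow> (\<forall>\<^sub>F y in at x within U. u y < c))"

definition psh_on :: "(complex ^ 'n) set \<Rightarrow> (complex ^ 'n \<Rightarrow> real) \<Rightarrow> bool" where
  "psh_on U u \<longleftrightarrow> usc_on U u \<and>
     (\<forall>a b. (\<forall>\<zeta>::complex. norm \<zeta> \<le> 1 \<longrightarrow> a + \<zeta> *s b \<in> U) \<longrightarrow>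
        u a \<le> (1 / (2 * pi)) * integral {0..2*pi} (\<lambda>t. u (a + cis t *s b)))"

definition mi_abs :: "('n::finite \<Rightarrow> nat) \<Rightarrow> nat" where
  "mi_abs \<alpha> = (\<Sum>i\<in>UNIV. \<alpha> i)"

definition zpow :: "complex ^ 'n::finite \<Rightarrow> ('n \<Rightarrow> nat) \<Rightarrow> complex" where
  "zpow z \<alpha> = (\<Prod>i\<in>UNIV. (z $ i) ^ (\<alpha> i))"

definition polyQ :: "nat \<Rightarrow> (('n::finite \<Rightarrow> nat) \<Rightarrow> ('n \<Rightarrow> nat) \<Rightarrow> complex) \<Rightarrow> complex ^ 'n \<Rightarrow> complex" where
  "polyQ j a z = (\<Sum>(\<alpha>,\<beta>)\<in>{(\<alpha>,\<beta>). mi_abs \<alpha> + mi_abs \<beta> = j}.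
       a \<alpha> \<beta> * zpow z \<alpha> * zpow (\<chi> i. cnj (z $ i)) \<beta>)"

definition polyH :: "nat \<Rightarrow> (('n::finite \<Rightarrow> nat) \<Rightarrow> ('n \<Rightarrow> nat) \<Rightarrow> complex) \<Rightarrow> complex ^ 'n \<Rightarrow> complex" where
  "polyH j a z = (\<Sum>\<alpha>\<in>{\<alpha>. mi_abs \<alpha> = j}. a \<alpha> (\<lambda>_. 0) * zpow z \<alpha>)"

definition real_coeffs :: "nat \<Rightarrow> (('n::finite \<Rightarrow> nat) \<Rightarrow> ('n \<Rightarrow> nat) \<Rightarrow> complex) \<Rightarrow> bool" where
  "real_coeffs j a \<longleftrightarrow> (\<forall>\<alpha> \<beta>. mi_abs \<alpha> + mi_abs \<beta> = j \<longrightarrow> a \<alpha> \<beta> = cnj (a \<beta> \<alpha>))"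

end

theory Submission
  imports Defs
begin

text \<open>
  Let r be C^4 and plurisubharmonic near 0 with cubic Taylor polynomial
  P(z) = Re z_m + Re Q_2(z) + Re Q_3(z).  The proof has three ingredients.

  (1) Taylor: since r is C^4 and r - P = o(|z|^3), we get |r - P| \<le> K |z|^4 on a small
      closed ball.  This is proved along rays, where the one-variable Taylor formula
      applies and the o(|z|^3) condition identifies the Taylor coefficients with P.
  (2) Circle means: Q_j splits as 2 Re H_j plus a mixed part M_j (terms with alpha and
      beta both nonzero).  Over the circle zeta(t) z, zeta(t) = (1 + e^(it))/2, the mean of
      zeta^p conj(zeta)^q is 2^-(p+q) plus 1/4 when p, q > 0 (for p + q \<le> 3).
  (3) Sub-mean value: r(z/2) is at most the mean of r over that circle.  By (1) and (2)
      all pure terms of P cancel and Re(M_2 + M_3) \<ge> -8 K |z|^4; inserting this into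
      r(z) \<ge> P(z) - K |z|^4 yields the theorem with C = 9 K + 1.
\<close>

text \<open>The directional derivative Dv f v x = Df(x) v, and its k-fold iterate along a fixed
  direction v: for f of class C^k, Dv_iter k f v x is the k-th derivative of t \<mapsto> f (x + t v) at 0.\<close>
definition Dv :: "('a::real_normed_vector \<Rightarrow> real) \<Rightarrow> 'a \<Rightarrow> 'a \<Rightarrow> real" where
  "Dv f v = (\<lambda>x. frechet_derivative f (at x) v)"

fun Dv_iter :: "nat \<Rightarrow> ('a::real_normed_vector \<Rightarrow> real) \<Rightarrow> 'a \<Rightarrow> 'a \<Rightarrow> real" where
  "Dv_iter 0 f v x = f x"
| "Dv_iter (Suc k) f v x = Dv_iter k (Dv f v) v x"

lemma Dv_cong:
  assumes "open U" "y \<in> U" "\<And>x. x \<in> U \<Longrightarrow> f x = g x"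
  shows "Dv f v y = Dv g v y"
proof -
  have "(f has_derivative D) (at y) \<longleftrightarrow> (g has_derivative D) (at y)" for D
    using has_derivative_transform_within_open[OF _ assms(1,2), of f _ _ g]
      has_derivative_transform_within_open[OF _ assms(1,2), of g _ _ f] assms(3) by metis
  then show ?thesis unfolding Dv_def frechet_derivative_def by simp
qed

lemma Dv_iter_cong:
  assumes "open U" "\<And>x. x \<in> U \<Longrightarrow> f x = g x" "y \<in> U"
  shows "Dv_iter k f v y = Dv_iter k g v y"
  using assms(2,3)
proof (induction k arbitrary: f g y)
  case 0
  then show ?case by simp
next
  case (Suc k)
  have "Dv f v x = Dv g v x" if "x \<in> U" for x
    using Dv_cong[OF assms(1) that] Suc.prems(1) by blast
  then have "Dv_iter k (Dv f v) v y = Dv_iter k (Dv g v) v y"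
    by (rule Suc.IH[OF _ Suc.prems(2)])
  then show ?case by simp
qed

lemma Ck_cong:
  assumes "open U" "\<And>x. x \<in> U \<Longrightarrow> f x = g x" "Ck_on k U f"
  shows "Ck_on k U g"
  using assms(2,3)
proof (induction k arbitrary: f g)
  case 0
  then show ?case using continuous_on_cong by force
next
  case (Suc k)
  then obtain f' where f': "\<forall>x\<in>U. (f has_derivative f' x) (at x)" "\<forall>v. Ck_on k U (\<lambda>x. f' x v)"
    by auto
  have "\<forall>x\<in>U. (g has_derivative f' x) (at x)"
    using f'(1) has_derivative_transform_within_open[OF _ assms(1)] Suc.prems(1) by metis
  then show ?case using f'(2) by auto
qed

lemma Ck_imp_continuous: "Ck_on k U f \<Longrightarrow> continuous_on U f"
proof (cases k)
  case (Suc j)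
  assume "Ck_on k U f"
  then obtain f' where "\<forall>x\<in>U. (f has_derivative f' x) (at x)" using Suc by auto
  then show ?thesis
    by (intro continuous_at_imp_continuous_on ballI has_derivative_continuous) auto
qed simp

lemma Ck_Suc_D:
  assumes "open U" "Ck_on (Suc k) U f"
  shows "\<forall>x\<in>U. (f has_derivative (\<lambda>v. Dv f v x)) (at x)" and "Ck_on k U (Dv f v)"
proof -
  obtain f' where f': "\<forall>x\<in>U. (f has_derivative f' x) (at x)" "\<forall>v. Ck_on k U (\<lambda>x. f' x v)"
    using assms(2) by auto
  have eq: "Dv f v x = f' x v" if "x \<in> U" for x v
    using f'(1) frechet_derivative_at that unfolding Dv_def by metis
  show "\<forall>x\<in>U. (f has_derivative (\<lambda>v. Dv f v x)) (at x)"
    using f'(1) eq by (metis (no_types, lifting) ext)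
  show "Ck_on k U (Dv f v)"
    using Ck_cong[OF assms(1) _ f'(2)[rule_format]] eq by metis
qed

lemma Ck_Suc_imp_Ck: "Ck_on (Suc k) U f \<Longrightarrow> Ck_on k U f"
proof (induction k arbitrary: f)
  case 0
  then show ?case using Ck_imp_continuous[OF 0] by simp
next
  case (Suc k)
  then obtain f' where "\<forall>x\<in>U. (f has_derivative f' x) (at x)" "\<forall>v. Ck_on (Suc k) U (\<lambda>x. f' x v)"
    by auto
  then show ?case using Suc.IH by auto
qed

lemma Ck_mono: "k \<le> n \<Longrightarrow> Ck_on n U f \<Longrightarrow> Ck_on k U f"
  by (induction n rule: dec_induct) (assumption, metis Ck_Suc_imp_Ck)

lemma Dv_iter_linear:
  assumes "open U" "finite I" "\<And>i. i \<in> I \<Longrightarrow> Ck_on k U (g i)" "x \<in> U"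
  shows "Dv_iter k (\<lambda>y. \<Sum>i\<in>I. c i * g i y) v x = (\<Sum>i\<in>I. c i * Dv_iter k (g i) v x)"
  using assms(3,4)
proof (induction k arbitrary: g x)
  case 0
  then show ?case by simp
next
  case (Suc k)
  have Dv_sum: "Dv (\<lambda>y. \<Sum>i\<in>I. c i * g i y) v y = (\<Sum>i\<in>I. c i * Dv (g i) v y)" if y: "y \<in> U" for y
  proof -
    have "((\<lambda>y. \<Sum>i\<in>I. c i * g i y) has_derivative (\<lambda>w. \<Sum>i\<in>I. c i * Dv (g i) w y)) (at y)"
      using Ck_Suc_D(1)[OF assms(1) Suc.prems(1)] y
      by (intro has_derivative_sum has_derivative_mult_right) auto
    then show ?thesis by (simp add: Dv_def frechet_derivative_at[symmetric])
  qed
  have "Dv_iter k (Dv (\<lambda>y. \<Sum>i\<in>I. c i * g i y) v) v x = Dv_iter k (\<lambda>y. \<Sum>i\<in>I. c i * Dv (g i) v y) v x"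
    by (rule Dv_iter_cong[OF assms(1) Dv_sum Suc.prems(2)])
  also have "\<dots> = (\<Sum>i\<in>I. c i * Dv_iter k (Dv (g i) v) v x)"
    using Ck_Suc_D(2)[OF assms(1) Suc.prems(1)] by (rule Suc.IH[OF _ Suc.prems(2)])
  finally show ?case by simp
qed

text \<open>The first derivative is linear in the direction, and accordingly Dv_iter (k+1) f v
  expands in the coordinates of v; this reduces bounds on higher derivatives to bounds on
  the finitely many functions Dv f i, i a basis vector.\<close>
lemma Dv_basis_expansion:
  fixes f :: "'a::euclidean_space \<Rightarrow> real"
  assumes "(f has_derivative (\<lambda>v. Dv f v y)) (at y)"
  shows "Dv f v y = (\<Sum>i\<in>Basis. (v \<bullet> i) * Dv f i y)"
proof -
  have l: "linear (\<lambda>v. Dv f v y)" using assms has_derivative_linear by blast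
  have "Dv f v y = Dv f (\<Sum>i\<in>Basis. (v \<bullet> i) *\<^sub>R i) y" by (simp add: euclidean_representation)
  also have "\<dots> = (\<Sum>i\<in>Basis. (v \<bullet> i) * Dv f i y)"
    by (simp only: linear_sum[OF l] linear_scale[OF l]) simp
  finally show ?thesis .
qed

lemma Dv_iter_Suc_basis:
  fixes f :: "'a::euclidean_space \<Rightarrow> real"
  assumes "open U" "Ck_on (Suc k) U f" "x \<in> U"
  shows "Dv_iter (Suc k) f v x = (\<Sum>i\<in>Basis. (v \<bullet> i) * Dv_iter k (Dv f i) v x)"
proof -
  have "Dv_iter k (Dv f v) v x = Dv_iter k (\<lambda>y. \<Sum>i\<in>Basis. (v \<bullet> i) * Dv f i y) v x"
    by (rule Dv_iter_cong[OF assms(1) _ assms(3)], rule Dv_basis_expansion)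
       (use Ck_Suc_D(1)[OF assms(1,2)] in blast)
  also have "\<dots> = (\<Sum>i\<in>Basis. (v \<bullet> i) * Dv_iter k (Dv f i) v x)"
    by (rule Dv_iter_linear[OF assms(1) _ _ assms(3)]) (auto intro: Ck_Suc_D(2)[OF assms(1,2)])
  finally show ?thesis by simp
qed

lemma Dv_iter_bound:
  fixes f :: "'a::euclidean_space \<Rightarrow> real"
  assumes "open U" "compact S" "S \<subseteq> U" "Ck_on k U f"
  shows "\<exists>M\<ge>0. \<forall>x\<in>S. \<forall>v. \<bar>Dv_iter k f v x\<bar> \<le> M * norm v ^ k"
  using assms(4)
proof (induction k arbitrary: f)
  case 0
  have "continuous_on S f" using Ck_imp_continuous[OF 0] assms(3) continuous_on_subset by blast
  then have "bounded (f ` S)" using compact_continuous_image assms(2) compact_imp_bounded by blast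
  then obtain M where "\<forall>y\<in>f ` S. norm y \<le> M" by (meson bounded_iff)
  then show ?case by (intro exI[of _ "\<bar>M\<bar>"]) force
next
  case (Suc k)
  have "\<exists>M\<ge>0. \<forall>x\<in>S. \<forall>v. \<bar>Dv_iter k (Dv f i) v x\<bar> \<le> M * norm v ^ k" for i
    using Suc.IH[OF Ck_Suc_D(2)[OF assms(1) Suc.prems]] .
  then obtain M where M: "\<And>i. M i \<ge> 0" "\<And>i x v. x \<in> S \<Longrightarrow> \<bar>Dv_iter k (Dv f i) v x\<bar> \<le> M i * norm v ^ k"
    by metis
  have "\<bar>Dv_iter (Suc k) f v x\<bar> \<le> (\<Sum>i\<in>Basis. M i) * norm v ^ Suc k" if x: "x \<in> S" for x v
  proof -
    have "\<bar>Dv_iter (Suc k) f v x\<bar> \<le> (\<Sum>i\<in>Basis. \<bar>v \<bullet> i\<bar> * \<bar>Dv_iter k (Dv f i) v x\<bar>)"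
      unfolding Dv_iter_Suc_basis[OF assms(1) Suc.prems subsetD[OF assms(3) x]] abs_mult[symmetric]
      by (rule sum_abs)
    also have "\<dots> \<le> (\<Sum>i\<in>Basis. norm v * (M i * norm v ^ k))"
      by (intro sum_mono mult_mono Basis_le_norm M(2)[OF x]) auto
    finally show ?thesis by (simp add: sum_distrib_left sum_distrib_right algebra_simps)
  qed
  then show ?case using M(1) by (intro exI[of _ "\<Sum>i\<in>Basis. M i"]) (auto intro: sum_nonneg)
qed

lemma Dv_iter_has_derivative:
  fixes f :: "'a::real_normed_vector \<Rightarrow> real"
  assumes "open U" "Ck_on (Suc k) U f" "x + t *\<^sub>R v \<in> U"
  shows "((\<lambda>s. Dv_iter k f v (x + s *\<^sub>R v)) has_real_derivative Dv_iter (Suc k) f v (x + t *\<^sub>R v)) (at t)"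
  using assms(2)
proof (induction k arbitrary: f)
  case 0
  have d: "(f has_derivative (\<lambda>w. Dv f w (x + t *\<^sub>R v))) (at (x + t *\<^sub>R v))"
    using Ck_Suc_D(1)[OF assms(1) 0] assms(3) by blast
  have l: "linear (\<lambda>w. Dv f w (x + t *\<^sub>R v))" using d has_derivative_linear by blast
  have i: "((\<lambda>s. x + s *\<^sub>R v) has_derivative (\<lambda>h. h *\<^sub>R v)) (at t)"
    by (auto intro!: derivative_eq_intros)
  have "((\<lambda>s. f (x + s *\<^sub>R v)) has_derivative (\<lambda>h. Dv f (h *\<^sub>R v) (x + t *\<^sub>R v))) (at t)"
    using has_derivative_compose[OF i d] by (simp add: o_def)
  moreover have "(\<lambda>h. Dv f (h *\<^sub>R v) (x + t *\<^sub>R v)) = (\<lambda>h. h * Dv f v (x + t *\<^sub>R v))"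
    using linear_scale[OF l] by auto
  moreover have "(\<lambda>h. h * Dv f v (x + t *\<^sub>R v)) = (*) (Dv f v (x + t *\<^sub>R v))"
    by (auto simp: mult.commute)
  ultimately show ?case by (simp add: has_field_derivative_def)
next
  case (Suc k)
  have "Ck_on (Suc k) U (Dv f v)" using Ck_Suc_D(2)[OF assms(1) Suc.prems] .
  from Suc.IH[OF this] show ?case by simp
qed

lemma taylor_ray_estimate:
  fixes f :: "'a::real_normed_vector \<Rightarrow> real"
  assumes U: "open U" "cball 0 \<delta> \<subseteq> U" and C: "Ck_on (Suc k) U f"
    and M: "\<forall>x\<in>cball 0 \<delta>. \<forall>v. \<bar>Dv_iter (Suc k) f v x\<bar> \<le> M * norm v ^ Suc k"
    and z: "z \<in> cball 0 \<delta>" and s: "0 < s" "s \<le> 1"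
  shows "\<bar>f (s *\<^sub>R z) - (\<Sum>m\<le>k. Dv_iter m f z 0 / fact m * s ^ m)\<bar>
    \<le> M / fact (Suc k) * norm z ^ Suc k * s ^ Suc k"
proof -
  have seg: "t *\<^sub>R z \<in> cball 0 \<delta>" if "0 \<le> t" "t \<le> 1" for t
    using z that by (auto intro: order_trans[OF mult_left_le_one_le])
  have "\<exists>t. 0 < t \<and> t < s \<and> f (s *\<^sub>R z) =
      (\<Sum>m<Suc k. Dv_iter m f z (0 *\<^sub>R z) / fact m * (s - 0) ^ m)
      + Dv_iter (Suc k) f z (t *\<^sub>R z) / fact (Suc k) * (s - 0) ^ Suc k"
  proof (rule Taylor_up[where diff = "\<lambda>m t. Dv_iter m f z (t *\<^sub>R z)"])
    show "\<forall>m t. m < Suc k \<and> 0 \<le> t \<and> t \<le> s \<longrightarrow>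
      ((\<lambda>t. Dv_iter m f z (t *\<^sub>R z)) has_real_derivative Dv_iter (Suc m) f z (t *\<^sub>R z)) (at t)"
    proof (intro allI impI)
      fix m t assume mt: "m < Suc k \<and> 0 \<le> t \<and> t \<le> s"
      then have "Ck_on (Suc m) U f" "0 + t *\<^sub>R z \<in> U"
        using Ck_mono[OF _ C, of "Suc m"] seg[of t] s U(2) by auto
      then show "((\<lambda>t. Dv_iter m f z (t *\<^sub>R z)) has_real_derivative Dv_iter (Suc m) f z (t *\<^sub>R z)) (at t)"
        using Dv_iter_has_derivative[OF U(1), of m f 0 t z] by simp
    qed
  qed (use s in auto)
  then obtain t where t: "0 < t" "t < s" and eq: "f (s *\<^sub>R z) =
      (\<Sum>m\<le>k. Dv_iter m f z 0 / fact m * s ^ m) + Dv_iter (Suc k) f z (t *\<^sub>R z) / fact (Suc k) * s ^ Suc k"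
    by (auto simp: lessThan_Suc_atMost)
  have "\<bar>Dv_iter (Suc k) f z (t *\<^sub>R z)\<bar> \<le> M * norm z ^ Suc k"
    using M seg[of t] t s by auto
  then show ?thesis
    unfolding eq using s by (simp add: abs_mult divide_right_mono mult_right_mono)
qed

lemma polynomial_little_o_coeffs_zero:
  fixes d :: "nat \<Rightarrow> real"
  assumes "((\<lambda>s. (\<Sum>m\<le>k. d m * s ^ m) / s ^ k) \<longlongrightarrow> 0) (at_right 0)"
  shows "\<forall>m\<le>k. d m = 0"
  using assms
proof (induction k)
  case 0
  then show ?case by (simp add: tendsto_const_iff)
next
  case (Suc k)
  have pos: "\<forall>\<^sub>F s in at_right 0. (0::real) < s" by (rule eventually_at_right_less)
  have "((\<lambda>s. s * ((\<Sum>m\<le>Suc k. d m * s ^ m) / s ^ Suc k) - d (Suc k) * s) \<longlongrightarrow> 0 * 0 - d (Suc k) * 0)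
      (at_right 0)"
    by (intro tendsto_intros Suc.prems tendsto_ident_at)
  moreover have "s * ((\<Sum>m\<le>Suc k. d m * s ^ m) / s ^ Suc k) - d (Suc k) * s = (\<Sum>m\<le>k. d m * s ^ m) / s ^ k"
    if "0 < s" for s :: real
    using that by (simp add: field_simps)
  ultimately have "((\<lambda>s. (\<Sum>m\<le>k. d m * s ^ m) / s ^ k) \<longlongrightarrow> 0) (at_right 0)"
    by (auto elim!: Lim_transform_eventually intro: eventually_mono[OF pos])
  then have low: "\<forall>m\<le>k. d m = 0" by (rule Suc.IH)
  have "((\<lambda>s. (\<Sum>m\<le>Suc k. d m * s ^ m) / s ^ Suc k) \<longlongrightarrow> d (Suc k)) (at_right 0)"
    by (rule Lim_transform_eventually[OF tendsto_const eventually_mono[OF pos]]) (simp add: low)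
  then have "d (Suc k) = 0" using tendsto_unique[OF _ _ Suc.prems] by simp
  then show ?case using low le_Suc_eq by blast
qed

lemma little_o_along_ray:
  fixes g :: "'a::real_normed_vector \<Rightarrow> real"
  assumes o: "g \<in> o[at 0](\<lambda>z. norm z ^ k)" and z: "z \<noteq> 0"
  shows "((\<lambda>s. g (s *\<^sub>R z) / s ^ k) \<longlongrightarrow> 0) (at_right 0)"
proof -
  have pos: "\<forall>\<^sub>F s in at_right 0. (0::real) < s" by (rule eventually_at_right_less)
  have "((\<lambda>s::real. s *\<^sub>R z) \<longlongrightarrow> 0 *\<^sub>R z) (at_right 0)"
    by (intro tendsto_intros)
  then have ray: "filterlim (\<lambda>s::real. s *\<^sub>R z) (at 0) (at_right 0)"
    unfolding filterlim_at using z by (auto intro: eventually_mono[OF pos])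
  have "((\<lambda>s. g (s *\<^sub>R z) / norm (s *\<^sub>R z) ^ k * norm z ^ k) \<longlongrightarrow> 0 * norm z ^ k) (at_right 0)"
    by (intro tendsto_intros filterlim_compose[OF smalloD_tendsto[OF o] ray])
  moreover have "g (s *\<^sub>R z) / norm (s *\<^sub>R z) ^ k * norm z ^ k = g (s *\<^sub>R z) / s ^ k" if "0 < s" for s
    using that z by (simp add: power_mult_distrib)
  ultimately show ?thesis
    by (auto elim!: Lim_transform_eventually intro: eventually_mono[OF pos])
qed

lemma ray_taylor_coeffs_unique:
  fixes g P :: "'a::real_normed_vector \<Rightarrow> real" and p :: "nat \<Rightarrow> 'a \<Rightarrow> real"
  assumes taylor: "\<And>s. 0 < s \<Longrightarrow> s \<le> 1 \<Longrightarrow> \<bar>g (s *\<^sub>R z) - (\<Sum>m\<le>k. c m * s ^ m)\<bar> \<le> B * s ^ Suc k"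
    and hom: "\<And>s. P (s *\<^sub>R z) = (\<Sum>m\<le>k. s ^ m * p m z)"
    and o: "(\<lambda>z. g z - P z) \<in> o[at 0](\<lambda>z. norm z ^ k)" and z: "z \<noteq> 0"
  shows "\<forall>m\<le>k. c m = p m z"
proof -
  have pos: "\<forall>\<^sub>F s in at_right 0. (0::real) < s" by (rule eventually_at_right_less)
  have small: "\<forall>\<^sub>F s in at_right 0. s < (1::real)"
    using order_tendstoD(2)[OF tendsto_ident_at[of "0::real" "{0<..}"], of 1] by simp
  have "((\<lambda>s. (g (s *\<^sub>R z) - (\<Sum>m\<le>k. c m * s ^ m)) / s ^ k) \<longlongrightarrow> 0) (at_right 0)"
  proof (rule tendsto_0_le[OF tendsto_ident_at, of _ "\<bar>B\<bar>"])
    show "\<forall>\<^sub>F s in at_right 0. norm ((g (s *\<^sub>R z) - (\<Sum>m\<le>k. c m * s ^ m)) / s ^ k) \<le> norm s * \<bar>B\<bar>"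
      using pos small
    proof eventually_elim
      case (elim s)
      then have "\<bar>g (s *\<^sub>R z) - (\<Sum>m\<le>k. c m * s ^ m)\<bar> / s ^ k \<le> \<bar>B\<bar> * s ^ Suc k / s ^ k"
        using taylor[of s] by (intro divide_right_mono) (auto intro: order_trans[OF _ mult_right_mono])
      then show ?case using elim by (simp add: abs_divide mult.commute)
    qed
  qed
  then have "((\<lambda>s. (g (s *\<^sub>R z) - P (s *\<^sub>R z)) / s ^ k - (g (s *\<^sub>R z) - (\<Sum>m\<le>k. c m * s ^ m)) / s ^ k)
      \<longlongrightarrow> 0 - 0) (at_right 0)"
    by (intro tendsto_intros little_o_along_ray[OF o z])
  moreover have "(\<Sum>m\<le>k. (c m - p m z) * s ^ m) = (\<Sum>m\<le>k. c m * s ^ m) - P (s *\<^sub>R z)" for s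
    unfolding hom by (simp add: sum_subtractf algebra_simps)
  ultimately have "((\<lambda>s. (\<Sum>m\<le>k. (c m - p m z) * s ^ m) / s ^ k) \<longlongrightarrow> 0) (at_right 0)"
    by (simp add: diff_divide_distrib)
  then show ?thesis
    using polynomial_little_o_coeffs_zero[of "\<lambda>m. c m - p m z"] by simp
qed

lemma taylor_remainder_bound:
  fixes f P :: "'a::euclidean_space \<Rightarrow> real" and p :: "nat \<Rightarrow> 'a \<Rightarrow> real"
  assumes U: "open U" "0 \<in> U" and C: "Ck_on (Suc k) U f" and f0: "f 0 = P 0"
    and hom: "\<And>s z. P (s *\<^sub>R z) = (\<Sum>m\<le>k. s ^ m * p m z)"
    and o: "(\<lambda>z. f z - P z) \<in> o[at 0](\<lambda>z. norm z ^ k)"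
  shows "\<exists>\<delta>>0. \<exists>K\<ge>0. cball 0 \<delta> \<subseteq> U \<and> (\<forall>z\<in>cball 0 \<delta>. \<bar>f z - P z\<bar> \<le> K * norm z ^ Suc k)"
proof -
  obtain \<delta> where \<delta>: "\<delta> > 0" "cball 0 \<delta> \<subseteq> U" using open_contains_cball U by blast
  obtain M where M: "M \<ge> 0" "\<forall>x\<in>cball 0 \<delta>. \<forall>v. \<bar>Dv_iter (Suc k) f v x\<bar> \<le> M * norm v ^ Suc k"
    using Dv_iter_bound[OF U(1) compact_cball \<delta>(2) C] by blast
  define K where "K = M / fact (Suc k)"
  have "\<bar>f z - P z\<bar> \<le> K * norm z ^ Suc k" if z: "z \<in> cball 0 \<delta>" for z
  proof (cases "z = 0")
    case False
    define c where "c m = Dv_iter m f z 0 / fact m" for m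
    have taylor: "\<bar>f (s *\<^sub>R z) - (\<Sum>m\<le>k. c m * s ^ m)\<bar> \<le> (K * norm z ^ Suc k) * s ^ Suc k"
      if "0 < s" "s \<le> 1" for s
      using taylor_ray_estimate[OF U(1) \<delta>(2) C M(2) z that] by (simp add: c_def K_def)
    have "P z = (\<Sum>m\<le>k. c m * 1 ^ m)"
      using ray_taylor_coeffs_unique[where P = P and p = p, OF taylor hom[where z = z] o False] hom[of 1 z] by simp
    then show ?thesis using taylor[of 1] by simp
  qed (use f0 in simp)
  moreover have "K \<ge> 0" using M(1) by (simp add: K_def)
  ultimately show ?thesis using \<delta> by blast
qed

lemma integral_cis_multiple:
  fixes k :: int
  shows "((\<lambda>t. cis (of_int k * t)) has_integral (if k = 0 then of_real (2 * pi) else 0)) {0..2*pi}"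
proof (cases "k = 0")
  case True
  then show ?thesis using has_integral_const_real[of "1::complex" 0 "2*pi"] by (simp add: scaleR_conv_of_real)
next
  case False
  define F where "F x = exp (\<i> * of_int k * x) / (\<i> * of_int k)" for x :: complex
  have "((\<lambda>t. F (of_real t)) has_vector_derivative cis (of_int k * t)) (at t within {0..2*pi})" for t
  proof -
    have "(F has_field_derivative exp (\<i> * of_int k * of_real t)) (at (of_real t))"
      unfolding F_def using False by (auto intro!: derivative_eq_intros)
    then show ?thesis
      using has_vector_derivative_real_field by (fastforce simp: cis_conv_exp mult.assoc)
  qed
  then have "((\<lambda>t. cis (of_int k * t)) has_integral (F (of_real (2*pi)) - F (of_real 0))) {0..2*pi}"
    by (intro fundamental_theorem_of_calculus) auto
  moreover have "exp (\<i> * of_int k * of_real (2*pi)) = cis (2 * pi * of_int k)"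
    by (simp add: cis_conv_exp algebra_simps)
  ultimately show ?thesis using False by (simp add: F_def)
qed

lemma binomial_cis: "(1 + cis t) ^ p = (\<Sum>i\<le>p. of_nat (p choose i) * cis t ^ i)"
  using binomial_ring[of "cis t" 1 p] by (simp add: add.commute)

text \<open>Mean of (1 + e^(it))^p (1 + e^(-it))^q over the circle: expanding both factors, only the
  constant character survives, with coefficient the sum of binomial products C(p,i) C(q,i).\<close>
lemma circle_moment:
  "((\<lambda>t. (1 + cis t) ^ p * cnj (1 + cis t) ^ q) has_integral
      of_real (2 * pi) * (\<Sum>i\<le>p. of_nat ((p choose i) * (q choose i)))) {0..2*pi}"
proof -
  have cis_pow: "cis t ^ i * cis (-t) ^ j = cis (of_int (int i - int j) * t)" for t i j
    by (simp add: Complex.DeMoivre cis_mult algebra_simps)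
  have expand: "(1 + cis t) ^ p * cnj (1 + cis t) ^ q =
      (\<Sum>i\<le>p. \<Sum>j\<le>q. of_nat ((p choose i) * (q choose j)) * cis (of_int (int i - int j) * t))" for t
  proof -
    have cnj_eq: "cnj (1 + cis t) = 1 + cis (-t)" by (simp add: cis_cnj)
    show ?thesis
      unfolding cnj_eq binomial_cis sum_product cis_pow[symmetric]
      by (intro sum.cong refl) (simp add: algebra_simps)
  qed
  have "((\<lambda>t. \<Sum>i\<le>p. \<Sum>j\<le>q. of_nat ((p choose i) * (q choose j)) * cis (of_int (int i - int j) * t))
      has_integral (\<Sum>i\<le>p. \<Sum>j\<le>q. of_nat ((p choose i) * (q choose j)) *
         (if int i - int j = 0 then of_real (2 * pi) else 0))) {0..2*pi}"
    by (intro has_integral_sum has_integral_mult_right integral_cis_multiple) auto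
  moreover have "(\<Sum>j\<le>q. of_nat ((p choose i) * (q choose j)) *
      (if int i - int j = 0 then of_real (2 * pi) else 0)) = (of_real (2 * pi) * of_nat ((p choose i) * (q choose i)) :: complex)" for i
  proof (cases "i \<le> q")
    case True
    then show ?thesis by (simp add: if_distrib sum.delta cong: if_cong)
  next
    case False
    then show ?thesis by (auto intro!: sum.neutral)
  qed
  ultimately show ?thesis unfolding expand by (simp add: sum_distrib_left)
qed

text \<open>For p + q \<le> 3 at most one of p, q exceeds 1, and the moment sum is 1 + p q; rescaled
  by 2^-(p+q) this is 2^-(p+q) plus 1/4 exactly when both p and q are positive.\<close>
lemma low_degree_moment_sum:
  assumes "p + q \<le> 3"
  shows "(\<Sum>i\<le>p. of_nat ((p choose i) * (q choose i)) :: complex) * (1/2) ^ (p + q) =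
    (1/2) ^ (p + q) + (if 0 < p \<and> 0 < q then 1/4 else 0)"
proof -
  have "p \<in> {0,1,2,3}" "q \<in> {0,1,2,3}" using assms by auto
  then show ?thesis using assms by (auto simp: eval_nat_numeral)
qed

text \<open>zeta t = (1 + e^(it))/2 runs over the circle of radius 1/2 centred at 1/2; hence
  zeta t *s z = z/2 + e^(it) (z/2) runs over the boundary of the complex disc centred at z/2
  that passes through 0 and z.\<close>
definition zeta :: "real \<Rightarrow> complex" where
  "zeta t = (1 + cis t) / 2"

lemma zeta_moment:
  assumes "p + q \<le> 3"
  shows "((\<lambda>t. zeta t ^ p * cnj (zeta t) ^ q) has_integral
    of_real (2 * pi) * ((1/2) ^ (p + q) + (if 0 < p \<and> 0 < q then 1/4 else 0))) {0..2*pi}"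
proof -
  have "zeta t ^ p * cnj (zeta t) ^ q = (1/2) ^ (p + q) * ((1 + cis t) ^ p * cnj (1 + cis t) ^ q)" for t
    by (simp add: zeta_def power_divide power_add field_simps)
  then show ?thesis
    using has_integral_mult_right[OF circle_moment, of "(1/2) ^ (p + q)" p q]
      low_degree_moment_sum[OF assms] by (simp add: ac_simps)
qed

lemma mi_abs_ge: "\<alpha> i \<le> mi_abs (\<alpha> :: 'n::finite \<Rightarrow> nat)"
  unfolding mi_abs_def by (rule member_le_sum) auto

lemma mi_abs_eq_0_iff: "mi_abs (\<alpha> :: 'n::finite \<Rightarrow> nat) = 0 \<longleftrightarrow> \<alpha> = (\<lambda>_. 0)"
  unfolding mi_abs_def by (auto simp: fun_eq_iff)

lemma finite_multi_indices: "finite {\<alpha> :: 'n::finite \<Rightarrow> nat. mi_abs \<alpha> = j}"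
proof (rule finite_subset)
  show "finite (\<Pi>\<^sub>E i \<in> (UNIV :: 'n set). {..j})" by (simp add: finite_PiE)
qed (auto simp: PiE_def Pi_def extensional_def intro: order_trans[OF mi_abs_ge])

abbreviation bidegree :: "nat \<Rightarrow> (('n::finite \<Rightarrow> nat) \<times> ('n \<Rightarrow> nat)) set" where
  "bidegree j \<equiv> {(\<alpha>, \<beta>). mi_abs \<alpha> + mi_abs \<beta> = j}"

lemma finite_bidegree: "finite (bidegree j :: (('n::finite \<Rightarrow> nat) \<times> ('n \<Rightarrow> nat)) set)"
proof (rule finite_subset)
  show "finite ((\<Union>k\<le>j. {\<alpha> :: 'n \<Rightarrow> nat. mi_abs \<alpha> = k}) \<times> (\<Union>k\<le>j. {\<beta> :: 'n \<Rightarrow> nat. mi_abs \<beta> = k}))"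
    by (simp add: finite_multi_indices)
qed auto

lemma zpow_smult: "zpow (c *s z) \<alpha> = c ^ mi_abs \<alpha> * zpow z \<alpha>"
  unfolding zpow_def mi_abs_def by (simp add: power_mult_distrib prod.distrib power_sum)

lemma zpow_cnj: "zpow (\<chi> i. cnj (z $ i)) \<alpha> = cnj (zpow z \<alpha>)"
  unfolding zpow_def by simp

definition qterm :: "(('n::finite \<Rightarrow> nat) \<Rightarrow> ('n \<Rightarrow> nat) \<Rightarrow> complex) \<Rightarrow> complex ^ 'n
    \<Rightarrow> ('n \<Rightarrow> nat) \<times> ('n \<Rightarrow> nat) \<Rightarrow> complex" where
  "qterm a z = (\<lambda>(\<alpha>, \<beta>). a \<alpha> \<beta> * zpow z \<alpha> * cnj (zpow z \<beta>))"

lemma polyQ_qterm: "polyQ j a z = (\<Sum>x\<in>bidegree j. qterm a z x)"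
  unfolding polyQ_def qterm_def zpow_cnj by simp

lemma polyQ_smult:
  "polyQ j a (c *s z) = (\<Sum>x\<in>bidegree j. qterm a z x * (c ^ mi_abs (fst x) * cnj c ^ mi_abs (snd x)))"
  unfolding polyQ_def qterm_def zpow_cnj
  by (intro sum.cong refl) (auto simp: zpow_smult algebra_simps)

lemma polyQ_real_homogeneous: "polyQ j a (complex_of_real s *s z) = complex_of_real s ^ j * polyQ j a z"
proof -
  have "polyQ j a (complex_of_real s *s z) = (\<Sum>x\<in>bidegree j. complex_of_real s ^ j * qterm a z x)"
    unfolding polyQ_smult by (intro sum.cong refl) (auto simp: power_add[symmetric] mult.commute)
  then show ?thesis by (simp add: polyQ_qterm sum_distrib_left)
qed

definition polyM :: "nat \<Rightarrow> (('n::finite \<Rightarrow> nat) \<Rightarrow> ('n \<Rightarrow> nat) \<Rightarrow> complex) \<Rightarrow> complex ^ 'n \<Rightarrow> complex" where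
  "polyM j a z = (\<Sum>x\<in>{x\<in>bidegree j. 0 < mi_abs (fst x) \<and> 0 < mi_abs (snd x)}. qterm a z x)"

lemma polyQ_decomposition:
  fixes a :: "('n::finite \<Rightarrow> nat) \<Rightarrow> ('n \<Rightarrow> nat) \<Rightarrow> complex"
  assumes "1 \<le> j" and real: "real_coeffs j a"
  shows "polyQ j a z = polyH j a z + cnj (polyH j a z) + polyM j a z"
proof -
  define hol where "hol = (\<lambda>\<alpha>. (\<alpha>, \<lambda>_::'n. 0::nat)) ` {\<alpha> :: 'n \<Rightarrow> nat. mi_abs \<alpha> = j}"
  define antihol where "antihol = (\<lambda>\<beta>. (\<lambda>_::'n. 0::nat, \<beta>)) ` {\<beta> :: 'n \<Rightarrow> nat. mi_abs \<beta> = j}"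
  define mixed where "mixed = {x\<in>bidegree j :: (('n \<Rightarrow> nat) \<times> ('n \<Rightarrow> nat)) set. 0 < mi_abs (fst x) \<and> 0 < mi_abs (snd x)}"
  have zero: "mi_abs (\<lambda>_::'n. 0::nat) = 0" by (simp add: mi_abs_eq_0_iff)
  have partition: "bidegree j = hol \<union> antihol \<union> mixed"
    using assms(1) by (auto simp: hol_def antihol_def mixed_def zero mi_abs_eq_0_iff[symmetric])
  have fin: "finite hol" "finite antihol" "finite mixed"
    using finite_bidegree[of j, where 'n = 'n] by (simp_all add: partition)
  have disj: "hol \<inter> antihol = {}" "(hol \<union> antihol) \<inter> mixed = {}"
    using assms(1) by (auto simp: hol_def antihol_def mixed_def zero)
  have "sum (qterm a z) hol = polyH j a z"
    unfolding hol_def polyH_def by (subst sum.reindex) (auto simp: inj_on_def qterm_def zpow_def)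
  moreover have "sum (qterm a z) antihol = cnj (polyH j a z)"
  proof -
    have "a (\<lambda>_. 0) \<beta> = cnj (a \<beta> (\<lambda>_. 0))" if "mi_abs \<beta> = j" for \<beta>
      using real that zero unfolding real_coeffs_def by (metis add_0)
    then show ?thesis
      unfolding antihol_def polyH_def by (subst sum.reindex) (auto simp: inj_on_def qterm_def zpow_def)
  qed
  moreover have "sum (qterm a z) mixed = polyM j a z"
    by (simp add: mixed_def polyM_def)
  ultimately show ?thesis
    unfolding polyQ_qterm partition using fin disj by (simp add: sum.union_disjoint)
qed

lemma polyQ_circle_mean:
  fixes a :: "('n::finite \<Rightarrow> nat) \<Rightarrow> ('n \<Rightarrow> nat) \<Rightarrow> complex"
  assumes "j \<le> 3"
  shows "((\<lambda>t. polyQ j a (zeta t *s z)) has_integral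
    of_real (2 * pi) * ((1/2) ^ j * polyQ j a z + 1/4 * polyM j a z)) {0..2*pi}"
proof -
  define mixed where "mixed x \<longleftrightarrow> 0 < mi_abs (fst x) \<and> 0 < mi_abs (snd x)"
    for x :: "('n \<Rightarrow> nat) \<times> ('n \<Rightarrow> nat)"
  have "((\<lambda>t. \<Sum>x\<in>bidegree j. qterm a z x * (zeta t ^ mi_abs (fst x) * cnj (zeta t) ^ mi_abs (snd x)))
    has_integral (\<Sum>x\<in>bidegree j. qterm a z x *
      (of_real (2 * pi) * ((1/2) ^ j + (if mixed x then 1/4 else 0))))) {0..2*pi}"
  proof (intro has_integral_sum[OF finite_bidegree] has_integral_mult_right)
    fix x :: "('n \<Rightarrow> nat) \<times> ('n \<Rightarrow> nat)"
    assume "x \<in> bidegree j"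
    then show "((\<lambda>t. zeta t ^ mi_abs (fst x) * cnj (zeta t) ^ mi_abs (snd x)) has_integral
        of_real (2 * pi) * ((1/2) ^ j + (if mixed x then 1/4 else 0))) {0..2*pi}"
      using zeta_moment[of "mi_abs (fst x)" "mi_abs (snd x)"] assms by (auto simp: mixed_def)
  qed
  moreover have "(\<Sum>x\<in>bidegree j. qterm a z x * (of_real (2 * pi) * ((1/2) ^ j + (if mixed x then 1/4 else 0))))
    = of_real (2 * pi) * ((1/2) ^ j * polyQ j a z + 1/4 * (\<Sum>x\<in>bidegree j. if mixed x then qterm a z x else 0))"
    unfolding polyQ_qterm distrib_left sum_distrib_left sum.distrib[symmetric]
    by (intro sum.cong) (auto simp: algebra_simps)
  moreover have "(\<Sum>x\<in>bidegree j. if mixed x then qterm a z x else 0) = polyM j a z"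
    unfolding polyM_def mixed_def by (rule sum.inter_filter[OF finite_bidegree, symmetric])
  ultimately show ?thesis unfolding polyQ_smult by simp
qed

lemma norm_smult_vec: "norm (c *s (z :: complex ^ 'n)) = norm c * norm z"
  unfolding norm_vec_def by (simp add: L2_set_right_distrib norm_mult)

lemma norm_zeta_le: "norm (zeta t) \<le> 1"
  using norm_triangle_ineq[of 1 "cis t"] by (simp add: zeta_def norm_divide)

lemma psh_mean_value_comparison:
  fixes r P :: "complex ^ 'n \<Rightarrow> real"
  assumes psh: "psh_on U r" and cont: "continuous_on U r" and ball: "cball 0 \<delta> \<subseteq> U"
    and z: "z \<in> cball 0 \<delta>" and K: "K \<ge> 0"
    and rem: "\<forall>w\<in>cball 0 \<delta>. \<bar>r w - P w\<bar> \<le> K * norm w ^ k"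
    and mean: "((\<lambda>t. P (zeta t *s z)) has_integral 2 * pi * A) {0..2*pi}"
  shows "P (of_real (1/2) *s z) \<le> A + 2 * K * norm z ^ k"
proof -
  define a where "a = of_real (1/2) *s z"
  have shrink: "c *s z \<in> cball 0 \<delta> \<and> K * norm (c *s z) ^ k \<le> K * norm z ^ k" if "norm c \<le> 1" for c
  proof -
    have "norm (c *s z) \<le> norm z"
      unfolding norm_smult_vec using that by (simp add: mult_left_le_one_le)
    then show ?thesis using z K by (auto intro!: mult_left_mono power_mono)
  qed
  have circle: "a + \<zeta> *s a = ((1 + \<zeta>) / 2) *s z" for \<zeta>
    unfolding a_def by (simp add: vec_eq_iff algebra_simps)
  have disc: "\<forall>\<zeta>. norm \<zeta> \<le> 1 \<longrightarrow> a + \<zeta> *s a \<in> U"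
  proof (intro allI impI)
    fix \<zeta> :: complex
    assume "norm \<zeta> \<le> 1"
    then have "norm ((1 + \<zeta>) / 2) \<le> 1"
      using norm_triangle_ineq[of 1 \<zeta>] by (simp add: norm_divide)
    then show "a + \<zeta> *s a \<in> U" unfolding circle using shrink ball by blast
  qed
  have "r a \<le> (1 / (2 * pi)) * integral {0..2*pi} (\<lambda>t. r (a + cis t *s a))"
    using psh disc unfolding psh_on_def by blast
  then have sub_mean: "r a \<le> (1 / (2 * pi)) * integral {0..2*pi} (\<lambda>t. r (zeta t *s z))"
    by (simp only: circle zeta_def)
  have "integral {0..2*pi} (\<lambda>t. r (zeta t *s z)) \<le> integral {0..2*pi} (\<lambda>t. P (zeta t *s z) + K * norm z ^ k)"
  proof (rule integral_le)
    have "(\<lambda>t. zeta t *s z) = (\<lambda>t. \<chi> i. (1 + cis t) / 2 * z $ i)"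
      by (simp add: vec_eq_iff zeta_def fun_eq_iff)
    moreover have "continuous_on {0..2*pi} (\<lambda>t. \<chi> i. (1 + cis t) / 2 * z $ i)"
      by (intro continuous_intros) auto
    ultimately have "continuous_on {0..2*pi} (\<lambda>t. zeta t *s z)" by (simp only:)
    then show "(\<lambda>t. r (zeta t *s z)) integrable_on {0..2*pi}"
      using shrink[OF norm_zeta_le] ball
      by (intro integrable_continuous_real continuous_on_compose2[OF cont]) auto
    show "(\<lambda>t. P (zeta t *s z) + K * norm z ^ k) integrable_on {0..2*pi}"
      using mean by (intro integrable_add integrable_const_ivl has_integral_integrable)
    show "r (zeta t *s z) \<le> P (zeta t *s z) + K * norm z ^ k" for t
      using rem shrink[OF norm_zeta_le[of t]] by force
  qed
  also have "integral {0..2*pi} (\<lambda>t. P (zeta t *s z) + K * norm z ^ k) = 2 * pi * (A + K * norm z ^ k)"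
    using integral_unique[OF has_integral_add[OF mean has_integral_const_real[of "K * norm z ^ k" 0 "2*pi"]]]
    by (simp add: algebra_simps)
  finally have "2 * pi * r a \<le> 2 * pi * (A + K * norm z ^ k)"
    using sub_mean by (simp add: field_simps)
  then have "r a \<le> A + K * norm z ^ k"
    using pi_gt_zero by (simp add: mult_le_cancel_left_pos)
  moreover have "r a \<ge> P a - K * norm z ^ k"
    using rem shrink[of "of_real (1/2)"] unfolding a_def by force
  ultimately show ?thesis unfolding a_def by simp
qed

definition cubic_poly :: "'n::finite \<Rightarrow> (('n \<Rightarrow> nat) \<Rightarrow> ('n \<Rightarrow> nat) \<Rightarrow> complex)
    \<Rightarrow> (('n \<Rightarrow> nat) \<Rightarrow> ('n \<Rightarrow> nat) \<Rightarrow> complex) \<Rightarrow> complex ^ 'n \<Rightarrow> real" where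
  "cubic_poly m a2 a3 w = Re (w $ m) + Re (polyQ 2 a2 w) + Re (polyQ 3 a3 w)"

text \<open>Core estimate: for the cubic Taylor polynomial P of a plurisubharmonic r the mixed part
  of Q_2 + Q_3 is bounded below by -8 K |z|^4.  Comparing P(z/2) with its circle mean,
  all pure terms cancel exactly and only a quarter of the mixed terms survives.\<close>
lemma mixed_part_lower_bound:
  fixes r :: "complex ^ 'n \<Rightarrow> real"
  assumes psh: "psh_on U r" and cont: "continuous_on U r" and ball: "cball 0 \<delta> \<subseteq> U"
    and K: "K \<ge> 0" and rem: "\<forall>w\<in>cball 0 \<delta>. \<bar>r w - cubic_poly m a2 a3 w\<bar> \<le> K * norm w ^ 4"
    and z: "z \<in> cball 0 \<delta>"
  shows "Re (polyM 2 a2 z + polyM 3 a3 z) \<ge> - 8 * K * norm z ^ 4"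
proof -
  define A where "A = z $ m / 2 + ((1/4) * polyQ 2 a2 z + (1/4) * polyM 2 a2 z)
    + ((1/8) * polyQ 3 a3 z + (1/4) * polyM 3 a3 z)"
  have linear_mean: "((\<lambda>t. (zeta t *s z) $ m) has_integral of_real (2 * pi) * (z $ m / 2)) {0..2*pi}"
    using has_integral_mult_right[OF zeta_moment[of 1 0], of "z $ m"] by (simp add: mult.commute)
  have "((\<lambda>t. (zeta t *s z) $ m + polyQ 2 a2 (zeta t *s z) + polyQ 3 a3 (zeta t *s z))
      has_integral of_real (2 * pi) * A) {0..2*pi}"
    using has_integral_add[OF has_integral_add[OF linear_mean
        polyQ_circle_mean[where j = 2 and a = a2 and z = z]] polyQ_circle_mean[where j = 3 and a = a3 and z = z]]
    by (simp add: A_def algebra_simps power2_eq_square power3_eq_cube)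
  from has_integral_linear[OF this bounded_linear_Re]
  have "((\<lambda>t. cubic_poly m a2 a3 (zeta t *s z)) has_integral 2 * pi * Re A) {0..2*pi}"
    by (simp add: cubic_poly_def o_def)
  from psh_mean_value_comparison[OF psh cont ball z K rem this]
  have "cubic_poly m a2 a3 (of_real (1/2) *s z) \<le> Re A + 2 * K * norm z ^ 4" .
  moreover have "cubic_poly m a2 a3 (of_real (1/2) *s z) = Re (z $ m) / 2 + Re (polyQ 2 a2 z) / 4 + Re (polyQ 3 a3 z) / 8"
    unfolding cubic_poly_def polyQ_real_homogeneous by (simp add: power2_eq_square power3_eq_cube flip: of_real_power)
  ultimately show ?thesis by (simp add: A_def)
qed

lemma scaleR_eq_smult_vec: "s *\<^sub>R (z :: complex ^ 'n) = complex_of_real s *s z"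
  unfolding vec_eq_iff vector_scaleR_component vector_smult_component by (simp add: scaleR_conv_of_real)

lemma cubic_taylor_remainder:
  fixes r :: "complex ^ 'n \<Rightarrow> real"
  assumes "open U" "0 \<in> U" "Ck_on 4 U r" "r 0 = 0"
    and "(\<lambda>z. r z - cubic_poly m a2 a3 z) \<in> o[at 0](\<lambda>z. norm z ^ 3)"
  shows "\<exists>\<delta>>0. \<exists>K\<ge>0. cball 0 \<delta> \<subseteq> U \<and>
    (\<forall>w\<in>cball 0 \<delta>. \<bar>r w - cubic_poly m a2 a3 w\<bar> \<le> K * norm w ^ 4)"
proof -
  define p where "p j w = (if j = 1 then Re (w $ m) else if j = 2 then Re (polyQ 2 a2 w)
    else if j = 3 then Re (polyQ 3 a3 w) else 0)" for j :: nat and w :: "complex ^ 'n"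
  have hom: "cubic_poly m a2 a3 (s *\<^sub>R w) = (\<Sum>j\<le>3. s ^ j * p j w)" for s w
    unfolding cubic_poly_def p_def scaleR_eq_smult_vec polyQ_real_homogeneous
    by (simp add: eval_nat_numeral flip: of_real_power)
  have "Ck_on (Suc 3) U r" using assms(3) by (simp del: Ck_on.simps)
  moreover have "r 0 = cubic_poly m a2 a3 0" using assms(4) hom[of 0 0] by (simp add: p_def eval_nat_numeral)
  ultimately show ?thesis
    using taylor_remainder_bound[OF assms(1,2) _ _ hom assms(5)] by simp
qed

theorem mainTheorem4:
  fixes r :: "complex ^ 'n \<Rightarrow> real" and U :: "(complex ^ 'n) set" and m :: 'n
    and a2 a3 :: "('n \<Rightarrow> nat) \<Rightarrow> ('n \<Rightarrow> nat) \<Rightarrow> complex"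
  assumes "open U" and "0 \<in> U"
    and "Ck_on 4 U r" and "psh_on U r" and "r 0 = 0"
    and "real_coeffs 2 a2" and "real_coeffs 3 a3"
    and "(\<lambda>z. r z - (Re (z $ m) + Re (polyQ 2 a2 z) + Re (polyQ 3 a3 z)))
           \<in> o[at 0](\<lambda>z. norm z ^ 3)"
  shows "\<exists>V C. open V \<and> 0 \<in> V \<and> V \<subseteq> U \<and> C > 0 \<and>
     (\<forall>z\<in>V. r z \<ge> Re (z $ m) + 2 * Re (polyH 2 a2 z + polyH 3 a3 z) - C * norm z ^ 4) \<and>
     {z\<in>V. r z < 0} \<subseteq>
       {z\<in>V. Re (z $ m) + 2 * Re (polyH 2 a2 z + polyH 3 a3 z) - C * norm z ^ 4 < 0}"
proof -
  obtain \<delta> K where \<delta>: "\<delta> > 0" "cball 0 \<delta> \<subseteq> U" and K: "K \<ge> 0"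
    and rem: "\<forall>w\<in>cball 0 \<delta>. \<bar>r w - cubic_poly m a2 a3 w\<bar> \<le> K * norm w ^ 4"
    using cubic_taylor_remainder[OF assms(1,2,3,5)] assms(8) unfolding cubic_poly_def by blast
  have "r z \<ge> Re (z $ m) + 2 * Re (polyH 2 a2 z + polyH 3 a3 z) - (9 * K + 1) * norm z ^ 4"
    if z: "z \<in> ball 0 \<delta>" for z
  proof -
    have "cubic_poly m a2 a3 z =
        Re (z $ m) + 2 * Re (polyH 2 a2 z + polyH 3 a3 z) + Re (polyM 2 a2 z + polyM 3 a3 z)"
      using polyQ_decomposition[OF _ assms(6), of z] polyQ_decomposition[OF _ assms(7), of z]
      by (simp add: cubic_poly_def)
    moreover have "Re (polyM 2 a2 z + polyM 3 a3 z) \<ge> - 8 * K * norm z ^ 4"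
      using mixed_part_lower_bound[OF assms(4) Ck_imp_continuous[OF assms(3)] \<delta>(2) K rem] z by simp
    moreover have "\<bar>r z - cubic_poly m a2 a3 z\<bar> \<le> K * norm z ^ 4" using rem z by simp
    moreover have "(9 * K + 1) * norm z ^ 4 = 9 * (K * norm z ^ 4) + norm z ^ 4"
      by (simp add: algebra_simps)
    ultimately show ?thesis
      using mult.assoc[of "-8" K "norm z ^ 4"] zero_le_power[OF norm_ge_zero, of z 4] by linarith
  qed
  then show ?thesis using \<delta> K
    by (intro exI[of _ "ball 0 \<delta>"] exI[of _ "9 * K + 1"]) fastforce
qed

end
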